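(* Let $0<q<1$. Then \[ q^{2}(1+q)^{2}(1+q^{2})+q^{6}+(1+q^{2})\sum_{n=1}^{\infty}\frac{(1/2|q^{2})_{n}^{2}}{[n+1]_{q^{2}}!\,[n+2]_{q^{2}}!}\,q^{6n+6}=\frac{(1+q)^{6}(1+q^{2})^{2}}{\pi_{q}(1+q+q^{2})^{2}}\,q^{9/4}. \]
   Context: Let $0<q<1$ and write $q^{x}=e^{x\log q}$. $[z]_{q^2}=\frac{1-q^{2z}}{1-q^2}$; $[0]_{q^2}!=1$, $[n]_{q^2}!=\prod_{k=1}^n[k]_{q^2}$; $(1/2|q^2)_n=\prod_{k=0}^{n-1}[1/2+k]_{q^2}$. With $(z;q)_\infty=\prod_{k\ge0}(1-zq^k)$, $\pi_q=(1-q^2)q^{1/4}\frac{(q^2;q^2)_\infty^2}{(q;q^2)_\infty^2}$. *)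

theory Defs
  imports "HOL-Analysis.Analysis"
begin

definition qnum2 :: "real \<Rightarrow> real \<Rightarrow> real" where
  "qnum2 q z = (1 - q powr (2 * z)) / (1 - q\<^sup>2)"

definition qfact2 :: "real \<Rightarrow> nat \<Rightarrow> real" where
  "qfact2 q n = (\<Prod>k=1..n. qnum2 q (real k))"

definition qhalf_poch :: "real \<Rightarrow> nat \<Rightarrow> real" where
  "qhalf_poch q n = (\<Prod>k<n. qnum2 q (1/2 + real k))"

definition qpoch_inf :: "real \<Rightarrow> real \<Rightarrow> real" where
  "qpoch_inf z q = (\<Prod>k. (1 - z * q ^ k))"

definition pi_q :: "real \<Rightarrow> real" where
  "pi_q q = (1 - q\<^sup>2) * q powr (1/4) * (qpoch_inf (q\<^sup>2) (q\<^sup>2))\<^sup>2 / (qpoch_inf q (q\<^sup>2))\<^sup>2"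

end

theory Submission
  imports Defs
begin

text \<open>
  With \<open>p = q\<^sup>2\<close>, the series is \<open>q\<^sup>2 (1 + q)\<^sup>2\<close> times the tail (from the index 2 on)
  of the basic hypergeometric series \<open>\<Sum> (a;p)\<^sub>k (b;p)\<^sub>k / ((p;p)\<^sub>k (c;p)\<^sub>k) (c/(ab))\<^sup>k\<close>
  with \<open>a = b = 1/q\<close> and \<open>c = q\<^sup>4\<close>, which the q-Gauss summation evaluates as
  \<open>(q\<^sup>5;p)\<^sub>\<infinity>\<^sup>2 / ((q\<^sup>4;p)\<^sub>\<infinity> (q\<^sup>6;p)\<^sub>\<infinity>)\<close>. The q-Gauss sum \<open>S(c)\<close> is obtained
  from the contiguous relation \<open>(1 - c)(1 - c/(ab)) S(c) = (1 - c/a)(1 - c/b) S(c p)\<close>, a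
  telescoping identity of the terms: iterating it \<open>J\<close> times expresses \<open>S(c)\<close> as a finite
  q-Pochhammer quotient times \<open>S(c p\<^sup>J)\<close>, and \<open>S(c p\<^sup>J) \<rightarrow> 1\<close>. What remains is to
  express \<open>\<pi>\<^sub>q\<close> through the same shifted infinite products and a rational identity in \<open>q\<close>.
\<close>

definition qpoch :: "real \<Rightarrow> real \<Rightarrow> nat \<Rightarrow> real" where
  "qpoch a p n = (\<Prod>i<n. 1 - a * p ^ i)"

lemma qpoch_0 [simp]: "qpoch a p 0 = 1"
  by (simp add: qpoch_def)

lemma qpoch_Suc: "qpoch a p (Suc n) = qpoch a p n * (1 - a * p ^ n)"
  by (simp add: qpoch_def)

lemma qpoch_add: "qpoch a p (m + n) = qpoch a p m * qpoch (a * p ^ m) p n"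
  by (induction n) (simp_all add: qpoch_Suc power_add mult_ac)

lemma mult_power_less_1:
  fixes a p :: real
  assumes "a < 1" "0 \<le> p" "p \<le> 1"
  shows "a * p ^ i < 1"
proof (cases "a \<le> 0")
  case True
  then have "a * p ^ i \<le> 0" using assms by (simp add: mult_nonpos_nonneg)
  then show ?thesis by simp
next
  case False
  then have "a * p ^ i \<le> a" using assms by (simp add: mult_left_le power_le_one)
  then show ?thesis using assms by linarith
qed

lemma qpoch_pos: "a < 1 \<Longrightarrow> 0 \<le> p \<Longrightarrow> p \<le> 1 \<Longrightarrow> 0 < qpoch a p n"
  unfolding qpoch_def by (intro prod_pos) (simp add: mult_power_less_1)

lemma qpoch_antimono:
  assumes "0 \<le> a'" "a' \<le> a" "a < 1" "0 \<le> p" "p \<le> 1"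
  shows "qpoch a p n \<le> qpoch a' p n"
  unfolding qpoch_def
proof (rule prod_mono)
  fix i
  show "0 \<le> 1 - a * p ^ i \<and> 1 - a * p ^ i \<le> 1 - a' * p ^ i"
    using mult_power_less_1[OF assms(3-5), of i] assms by (auto intro: mult_right_mono)
qed

lemma convergent_prod_qpoch:
  fixes a p :: real
  assumes "\<bar>p\<bar> < 1"
  shows "convergent_prod (\<lambda>i. 1 - a * p ^ i)"
proof -
  have "summable (\<lambda>i. norm ((1 - a * p ^ i) - 1))"
    using assms by (simp add: abs_mult power_abs summable_mult summable_geometric)
  then show ?thesis
    by (intro abs_convergent_prod_imp_convergent_prod summable_imp_abs_convergent_prod)
qed

lemma qpoch_LIMSEQ:
  assumes "\<bar>p\<bar> < 1"
  shows "(\<lambda>n. qpoch a p n) \<longlonglongrightarrow> qpoch_inf a p"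
proof -
  have "(\<lambda>n. qpoch a p (Suc n)) \<longlonglongrightarrow> qpoch_inf a p"
    using convergent_prod_LIMSEQ[OF convergent_prod_qpoch[OF assms]]
    by (simp add: qpoch_def qpoch_inf_def lessThan_Suc_atMost)
  then show ?thesis
    by (rule LIMSEQ_imp_Suc)
qed

lemma qpoch_inf_split:
  assumes "\<bar>p\<bar> < 1"
  shows "qpoch_inf a p = qpoch a p n * qpoch_inf (a * p ^ n) p"
  using has_prod_unique
      [OF has_prod_ignore_initial_segment'[OF convergent_prod_qpoch[OF assms], of a n]]
  by (simp add: qpoch_inf_def qpoch_def power_add mult_ac)

lemma qpoch_inf_pos:
  assumes "a < 1" "0 \<le> p" "p < 1"
  shows "0 < qpoch_inf a p"
proof -
  have "qpoch_inf a p \<noteq> 0"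
    unfolding qpoch_inf_def
    using convergent_prod_qpoch[of p a] assms mult_power_less_1[of a p]
    by (intro prodinf_nonzero) (auto simp: less_le)
  moreover have "0 \<le> qpoch_inf a p"
    using qpoch_pos[of a p] assms
    by (intro LIMSEQ_le_const[OF qpoch_LIMSEQ]) (auto intro: less_imp_le)
  ultimately show ?thesis by simp
qed

definition qgauss_term :: "real \<Rightarrow> real \<Rightarrow> real \<Rightarrow> real \<Rightarrow> nat \<Rightarrow> real" where
  "qgauss_term a b c p k =
     qpoch a p k * qpoch b p k / (qpoch p p k * qpoch c p k) * (c / (a * b)) ^ k"

context
  fixes a b p :: real
  assumes p: "0 < p" "p < 1" and a: "a \<noteq> 0" and b: "b \<noteq> 0"
begin

lemma qgauss_term_0 [simp]: "qgauss_term a b c p 0 = 1"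
  by (simp add: qgauss_term_def)

lemma qgauss_term_Suc:
  assumes "c < 1"
  shows "qgauss_term a b c p (Suc k) = qgauss_term a b c p k *
    ((1 - a * p ^ k) * (1 - b * p ^ k) * (c / (a * b)) / ((1 - p * p ^ k) * (1 - c * p ^ k)))"
proof -
  have "0 < qpoch p p k" "0 < qpoch c p k" "p * p ^ k < 1" "c * p ^ k < 1"
    using p assms by (auto intro!: qpoch_pos mult_power_less_1)
  then show ?thesis
    unfolding qgauss_term_def qpoch_Suc by (simp add: field_simps)
qed

lemma qgauss_term_shift:
  assumes "c < 1"
  shows "qgauss_term a b (c * p) p k = qgauss_term a b c p k * ((1 - c) * p ^ k / (1 - c * p ^ k))"
proof -
  have "qpoch c p (Suc k) = (1 - c) * qpoch (c * p) p k"
    using qpoch_add[of c p 1 k] by (simp add: qpoch_def)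
  then have shift: "qpoch (c * p) p k = qpoch c p k * (1 - c * p ^ k) / (1 - c)"
    using assms by (simp add: qpoch_Suc field_simps)
  have "0 < qpoch p p k" "0 < qpoch c p k" "c * p ^ k < 1"
    using p assms by (auto intro!: qpoch_pos mult_power_less_1)
  then show ?thesis
    unfolding qgauss_term_def shift using assms
    by (simp add: field_simps)
qed

lemma qgauss_partial_sums_contiguous:
  assumes "c < 1"
  shows "(1 - c) * (1 - c / (a * b)) * (\<Sum>k<K. qgauss_term a b c p k)
       - (1 - c / a) * (1 - c / b) * (\<Sum>k<K. qgauss_term a b (c * p) p k)
       = - (1 - c) * (1 - p ^ K) * qgauss_term a b c p K"
proof (induction K)
  case 0
  then show ?case by simp
next
  case (Suc K)
  let ?z = "c / (a * b)"
  have step: "(1 - c) * (1 - ?z) * U - (1 - c / a) * (1 - c / b) * (U * ((1 - c) * x / (1 - c * x)))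
      = - (1 - c) * (1 - p * x)
          * (U * ((1 - a * x) * (1 - b * x) * ?z / ((1 - p * x) * (1 - c * x))))
        + (1 - c) * (1 - x) * U"
    if "1 - p * x \<noteq> 0" "1 - c * x \<noteq> 0" for x U
  proof -
    \<comment> \<open>the one polynomial identity behind the telescoping\<close>
    have poly: "(1 - ?z) * (1 - c * x) - (1 - c / a) * (1 - c / b) * x
        = - (1 - a * x) * (1 - b * x) * ?z + (1 - x) * (1 - c * x)"
      using a b by (simp add: field_simps)
    have "(1 - c) * (1 - ?z) * U - (1 - c / a) * (1 - c / b) * (U * ((1 - c) * x / (1 - c * x)))
        = (1 - c) * U / (1 - c * x) * ((1 - ?z) * (1 - c * x) - (1 - c / a) * (1 - c / b) * x)"
      using that(2) a b by (simp add: field_simps)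
    also have "\<dots> = - (1 - c) * (U * ((1 - a * x) * (1 - b * x) * ?z / (1 - c * x)))
        + (1 - c) * (1 - x) * U"
      using that(2) a b unfolding poly by (simp add: field_simps)
    also have "\<dots> = - (1 - c) * (1 - p * x)
          * (U * ((1 - a * x) * (1 - b * x) * ?z / ((1 - p * x) * (1 - c * x))))
        + (1 - c) * (1 - x) * U"
      using that(1) by simp
    finally show ?thesis .
  qed
  have "1 - p * p ^ K \<noteq> 0" "1 - c * p ^ K \<noteq> 0"
    using mult_power_less_1[of p p K] mult_power_less_1[of c p K] p assms by auto
  then have "(1 - c) * (1 - ?z) * qgauss_term a b c p K
             - (1 - c / a) * (1 - c / b) * qgauss_term a b (c * p) p K
           = - (1 - c) * (1 - p ^ Suc K) * qgauss_term a b c p (Suc K)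
             + (1 - c) * (1 - p ^ K) * qgauss_term a b c p K"
    unfolding qgauss_term_shift[OF assms] qgauss_term_Suc[OF assms] power_Suc by (rule step)
  with Suc.IH show ?case
    by (simp only: sum.lessThan_Suc distrib_left mult_minus_left)
qed

lemma qgauss_sums_contiguous:
  assumes "c < 1" "summable (qgauss_term a b c p)" "summable (qgauss_term a b (c * p) p)"
  shows "(1 - c) * (1 - c / (a * b)) * suminf (qgauss_term a b c p)
       = (1 - c / a) * (1 - c / b) * suminf (qgauss_term a b (c * p) p)"
proof -
  have "(\<lambda>K. (1 - c) * (1 - c / (a * b)) * (\<Sum>k<K. qgauss_term a b c p k)
          - (1 - c / a) * (1 - c / b) * (\<Sum>k<K. qgauss_term a b (c * p) p k))
      \<longlonglongrightarrow> (1 - c) * (1 - c / (a * b)) * suminf (qgauss_term a b c p)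
          - (1 - c / a) * (1 - c / b) * suminf (qgauss_term a b (c * p) p)"
    using assms(2,3) by (intro tendsto_intros summable_LIMSEQ)
  moreover have "(\<lambda>K. - (1 - c) * (1 - p ^ K) * qgauss_term a b c p K) \<longlonglongrightarrow> - (1 - c) * (1 - 0) * 0"
    using p assms(2) by (intro tendsto_intros LIMSEQ_power_zero summable_LIMSEQ_zero) auto
  ultimately show ?thesis
    unfolding qgauss_partial_sums_contiguous[OF assms(1)] using LIMSEQ_unique by fastforce
qed

lemma summable_abs_qgauss_term:
  assumes "c < 1" "\<bar>c / (a * b)\<bar> < 1"
  shows "summable (\<lambda>k. \<bar>qgauss_term a b c p k\<bar>)"
proof -
  define z where "z = c / (a * b)"
  define r where
    "r k = (1 - a * p ^ k) * (1 - b * p ^ k) * z / ((1 - p * p ^ k) * (1 - c * p ^ k))" for k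
  define \<rho> where "\<rho> = (1 + \<bar>z\<bar>) / 2"
  have "(\<lambda>k. \<bar>r k\<bar>) \<longlonglongrightarrow> \<bar>(1 - a * 0) * (1 - b * 0) * z / ((1 - p * 0) * (1 - c * 0))\<bar>"
    unfolding r_def using p by (intro tendsto_intros LIMSEQ_power_zero) auto
  then have lim: "(\<lambda>k. \<bar>r k\<bar>) \<longlonglongrightarrow> \<bar>z\<bar>"
    by simp
  have "\<bar>z\<bar> < 1"
    using assms(2) by (simp only: z_def)
  then have "\<bar>z\<bar> < \<rho>" "\<rho> < 1"
    unfolding \<rho>_def by auto
  then obtain N where N: "\<And>k. k \<ge> N \<Longrightarrow> \<bar>r k\<bar> < \<rho>"
    using order_tendstoD(2)[OF lim] by (auto simp: eventually_sequentially)
  show ?thesis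
  proof (rule summable_ratio_test[OF \<open>\<rho> < 1\<close>, of N])
    fix k assume "k \<ge> N"
    then have "\<bar>qgauss_term a b c p k\<bar> * \<bar>r k\<bar> \<le> \<bar>qgauss_term a b c p k\<bar> * \<rho>"
      using N[of k] by (intro mult_left_mono) auto
    then show "norm \<bar>qgauss_term a b c p (Suc k)\<bar> \<le> \<rho> * norm \<bar>qgauss_term a b c p k\<bar>"
      by (simp add: qgauss_term_Suc[OF assms(1)] r_def z_def abs_mult mult.commute)
  qed
qed

lemma abs_qgauss_term_le:
  assumes "0 < c'" "c' \<le> c" "c < 1" "k \<ge> 1"
  shows "\<bar>qgauss_term a b c' p k\<bar> \<le> c' / c * \<bar>qgauss_term a b c p k\<bar>"
proof -
  let ?N = "\<bar>qpoch a p k * qpoch b p k\<bar> / qpoch p p k"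
  have pos: "0 < qpoch p p k" "0 < qpoch c p k" "0 < qpoch c' p k"
    using p assms by (auto intro!: qpoch_pos)
  have "qpoch c p k \<le> qpoch c' p k"
    using p assms by (intro qpoch_antimono) auto
  then have "?N / qpoch c' p k \<le> ?N / qpoch c p k"
    using pos by (intro divide_left_mono) auto
  moreover have "\<bar>c' / (a * b)\<bar> ^ k \<le> c' / c * \<bar>c / (a * b)\<bar> ^ k"
  proof -
    have "\<bar>c' / (a * b)\<bar> ^ k = (c' / c) ^ k * \<bar>c / (a * b)\<bar> ^ k"
      using assms by (simp add: power_mult_distrib[symmetric])
    also have "(c' / c) ^ k \<le> c' / c"
      using assms power_decreasing[of 1 k "c' / c"] by simp
    finally show ?thesis by (simp add: mult_right_mono)
  qed
  ultimately have "?N / qpoch c' p k * \<bar>c' / (a * b)\<bar> ^ k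
      \<le> ?N / qpoch c p k * (c' / c * \<bar>c / (a * b)\<bar> ^ k)"
    using pos by (intro mult_mono) auto
  then show ?thesis
    using pos assms by (simp add: qgauss_term_def abs_mult power_abs mult_ac)
qed

lemma qgauss_parameter_shift_bounds:
  assumes "0 < c" "c < 1" "\<bar>c / (a * b)\<bar> < 1"
  shows "0 < c * p ^ J" "c * p ^ J \<le> c" "c * p ^ J < 1" "\<bar>c * p ^ J / (a * b)\<bar> < 1"
proof -
  show "0 < c * p ^ J" "c * p ^ J \<le> c"
    using p assms by (simp_all add: mult_left_le power_le_one)
  then show "c * p ^ J < 1"
    using assms by linarith
  have "\<bar>c * p ^ J / (a * b)\<bar> = p ^ J * \<bar>c / (a * b)\<bar>"
    using p by (simp add: abs_mult)
  also have "\<dots> \<le> \<bar>c / (a * b)\<bar>"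
    using p by (intro mult_left_le_one_le) (auto simp: power_le_one)
  finally show "\<bar>c * p ^ J / (a * b)\<bar> < 1"
    using assms by linarith
qed

lemma qgauss_sum_shifted_tendsto_1:
  assumes "0 < c" "c < 1" "\<bar>c / (a * b)\<bar> < 1"
  shows "(\<lambda>J. suminf (qgauss_term a b (c * p ^ J) p)) \<longlonglongrightarrow> 1"
proof -
  let ?t = "\<lambda>J k. qgauss_term a b (c * p ^ J) p k"
  define M where "M = (\<Sum>k. \<bar>qgauss_term a b c p (Suc k)\<bar>)"
  note cJ = qgauss_parameter_shift_bounds[OF assms]
  have summable: "summable (\<lambda>k. \<bar>?t J k\<bar>)" for J
    using summable_abs_qgauss_term[of "c * p ^ J"] cJ[of J] assms by fastforce
  have summable_tail: "summable (\<lambda>k. \<bar>qgauss_term a b c p (Suc k)\<bar>)"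
    using summable_ignore_initial_segment[OF summable_abs_qgauss_term[OF assms(2,3)], of 1] by simp
  have bound: "norm (suminf (?t J) - 1) \<le> p ^ J * M" for J
  proof -
    have "suminf (?t J) - 1 = (\<Sum>k. ?t J (Suc k))"
      using suminf_split_head[OF summable_rabs_cancel[OF summable[of J]]] by simp
    also have "\<bar>\<dots>\<bar> \<le> (\<Sum>k. \<bar>?t J (Suc k)\<bar>)"
      using summable_ignore_initial_segment[OF summable[of J], of 1] by (intro summable_rabs) simp
    also have "\<dots> \<le> (\<Sum>k. p ^ J * \<bar>qgauss_term a b c p (Suc k)\<bar>)"
    proof (rule suminf_le)
      fix k
      show "\<bar>?t J (Suc k)\<bar> \<le> p ^ J * \<bar>qgauss_term a b c p (Suc k)\<bar>"
        using abs_qgauss_term_le[of "c * p ^ J" c "Suc k"] cJ[of J] assms by simp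
    qed (use summable_ignore_initial_segment[OF summable[of J], of 1] summable_tail
         in \<open>auto intro: summable_mult\<close>)
    also have "\<dots> = p ^ J * M"
      unfolding M_def using summable_tail by (rule suminf_mult)
    finally show ?thesis
      by simp
  qed
  have "(\<lambda>J. p ^ J * M) \<longlonglongrightarrow> 0 * M"
    using p by (intro tendsto_intros LIMSEQ_power_zero) auto
  then have "(\<lambda>J. suminf (?t J) - 1) \<longlonglongrightarrow> 0"
    using Lim_null_comparison[OF always_eventually[OF allI[OF bound]]] by simp
  then have "(\<lambda>J. (suminf (?t J) - 1) + 1) \<longlonglongrightarrow> 0 + 1"
    by (intro tendsto_add tendsto_const)
  then show ?thesis
    by simp
qed

lemma qgauss_sum_iterate:
  assumes "0 < c" "c < 1" "\<bar>c / (a * b)\<bar> < 1"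
  shows "suminf (qgauss_term a b c p)
       = qpoch (c / a) p J * qpoch (c / b) p J / (qpoch c p J * qpoch (c / (a * b)) p J)
         * suminf (qgauss_term a b (c * p ^ J) p)"
proof (induction J)
  case 0
  then show ?case by simp
next
  case (Suc J)
  let ?c = "c * p ^ J"
  note c = qgauss_parameter_shift_bounds[OF assms, of J]
  have summable: "summable (qgauss_term a b (c * p ^ J') p)" for J'
    using summable_abs_qgauss_term qgauss_parameter_shift_bounds[OF assms, of J']
    by (blast intro: summable_rabs_cancel)
  have "(1 - ?c) * (1 - ?c / (a * b)) * suminf (qgauss_term a b ?c p)
      = (1 - ?c / a) * (1 - ?c / b) * suminf (qgauss_term a b (?c * p) p)"
    using summable[of "Suc J", unfolded power_Suc2 mult.assoc[symmetric]]
    by (intro qgauss_sums_contiguous c(3) summable)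
  moreover have "1 - ?c \<noteq> 0" "1 - ?c / (a * b) \<noteq> 0"
    using c(3) c(4)[unfolded abs_less_iff] by linarith+
  moreover have "S = Y / X * S'" if "X * S = Y * S'" "X \<noteq> 0" for X Y S S' :: real
    using that by (simp add: field_simps)
  ultimately have contiguous: "suminf (qgauss_term a b ?c p)
      = (1 - ?c / a) * (1 - ?c / b) / ((1 - ?c) * (1 - ?c / (a * b)))
        * suminf (qgauss_term a b (?c * p) p)"
    by simp
  show ?case
    unfolding Suc.IH contiguous by (simp add: qpoch_Suc power_Suc2 mult_ac)
qed

theorem q_gauss_sum:
  assumes "0 < c" "c < 1" "\<bar>c / (a * b)\<bar> < 1"
  shows "qgauss_term a b c p sums
    (qpoch_inf (c / a) p * qpoch_inf (c / b) p / (qpoch_inf c p * qpoch_inf (c / (a * b)) p))"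
proof -
  have "0 < qpoch_inf c p" "0 < qpoch_inf (c / (a * b)) p"
    using p assms(2) assms(3)[unfolded abs_less_iff] by (auto intro!: qpoch_inf_pos)
  then have "(\<lambda>J. qpoch (c / a) p J * qpoch (c / b) p J / (qpoch c p J * qpoch (c / (a * b)) p J)
              * suminf (qgauss_term a b (c * p ^ J) p))
      \<longlonglongrightarrow> qpoch_inf (c / a) p * qpoch_inf (c / b) p / (qpoch_inf c p * qpoch_inf (c / (a * b)) p) * 1"
    using p by (intro tendsto_intros qpoch_LIMSEQ qgauss_sum_shifted_tendsto_1 assms) auto
  then have "suminf (qgauss_term a b c p)
      = qpoch_inf (c / a) p * qpoch_inf (c / b) p / (qpoch_inf c p * qpoch_inf (c / (a * b)) p)"
    unfolding qgauss_sum_iterate[OF assms, symmetric] by (simp add: LIMSEQ_const_iff)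
  with summable_rabs_cancel[OF summable_abs_qgauss_term] assms show ?thesis
    by (metis summable_sums)
qed

end
lemma qnum2_of_nat:
  assumes "0 < q"
  shows "qnum2 q (real n) = (1 - (q\<^sup>2) ^ n) / (1 - q\<^sup>2)"
proof -
  have "q powr (2 * real n) = q ^ (2 * n)"
    using assms powr_realpow[of q "2 * n"] by simp
  then have "q powr (2 * real n) = (q\<^sup>2) ^ n"
    by (simp add: power_mult)
  then show ?thesis by (simp add: qnum2_def)
qed

lemma qnum2_half_integer:
  assumes "0 < q"
  shows "qnum2 q (1/2 + real k) = (1 - q * (q\<^sup>2) ^ k) / (1 - q\<^sup>2)"
proof -
  have "q powr (2 * (1/2 + real k)) = q ^ Suc (2 * k)"
    using assms powr_realpow[of q "Suc (2 * k)"] by (simp add: distrib_left)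
  then have "q powr (2 * (1/2 + real k)) = q * (q\<^sup>2) ^ k"
    by (simp add: power_mult)
  then show ?thesis by (simp add: qnum2_def)
qed

lemma qfact2_eq_qpoch:
  assumes "0 < q"
  shows "qfact2 q n = qpoch (q\<^sup>2) (q\<^sup>2) n / (1 - q\<^sup>2) ^ n"
  by (induction n) (simp_all add: qfact2_def qpoch_Suc qnum2_of_nat[OF assms] atLeastAtMostSuc_conv)

lemma qhalf_poch_eq_qpoch:
  assumes "0 < q"
  shows "qhalf_poch q n = qpoch q (q\<^sup>2) n / (1 - q\<^sup>2) ^ n"
  by (induction n) (simp_all add: qhalf_poch_def qpoch_Suc qnum2_half_integer[OF assms])

lemma qhalf_term_eq_qgauss_term:
  assumes "0 < q" "q < 1"
  shows "(qhalf_poch q n)\<^sup>2 / (qfact2 q (n + 1) * qfact2 q (n + 2)) * q ^ (6 * n + 6)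
       = q\<^sup>2 * (1 + q)\<^sup>2 * qgauss_term (1/q) (1/q) (q ^ 4) (q\<^sup>2) (n + 1)"
proof -
  let ?p = "q\<^sup>2" and ?A = "qpoch q (q\<^sup>2) n"
  let ?B = "qpoch (q\<^sup>2) (q\<^sup>2) (n + 1)" and ?C = "qpoch (q ^ 4) (q\<^sup>2) (n + 1)"
  have "1/q * ?p ^ 1 = q" "?p * ?p ^ 1 = q ^ 4"
    using assms by (simp_all add: power2_eq_square power4_eq_xxxx)
  then have numerator: "qpoch (1/q) ?p (n + 1) = (1 - 1/q) * ?A"
    and denominator: "qpoch ?p ?p (n + 2) = (1 - ?p) * ?C"
    using qpoch_add[of "1/q" ?p 1 n] qpoch_add[of ?p ?p 1 "n + 1"]
    by (simp_all add: qpoch_Suc[of _ _ 0])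
  have cancel: "(x / e)\<^sup>2 / (y / (e * r) * (r * z / (e * r\<^sup>2))) = r\<^sup>2 * x\<^sup>2 / (y * z)"
    if "e \<noteq> 0" "r \<noteq> 0" for x y z e r :: real
    using that by (simp add: field_simps power2_eq_square)
  have "?p < 1"
    using assms by (simp add: power_less_one_iff)
  then have lhs: "(qhalf_poch q n)\<^sup>2 / (qfact2 q (n + 1) * qfact2 q (n + 2))
      = (1 - ?p)\<^sup>2 * ?A\<^sup>2 / (?B * ?C)"
    unfolding qhalf_poch_eq_qpoch[OF assms(1)] qfact2_eq_qpoch[OF assms(1)] denominator
      power_add power_one_right
    by (intro cancel) simp_all
  have "q ^ 4 / (1/q * (1/q)) = q ^ 4 * q\<^sup>2"
    using assms by (simp add: power2_eq_square)
  also have "\<dots> = q ^ 6"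
    by (simp flip: power_add)
  finally have "(q ^ 4 / (1/q * (1/q))) ^ (n + 1) = (q ^ 6) ^ (n + 1)"
    by simp
  also have "\<dots> = q ^ (6 * n + 6)"
    unfolding power_mult[symmetric] by (simp add: algebra_simps)
  finally have rhs: "qgauss_term (1/q) (1/q) (q ^ 4) ?p (n + 1)
      = ((1 - 1/q) * ?A)\<^sup>2 / (?B * ?C) * q ^ (6 * n + 6)"
    unfolding qgauss_term_def numerator by (simp only: power2_eq_square[of "(1 - 1/q) * ?A"])
  have "(1 - ?p)\<^sup>2 = q\<^sup>2 * (1 + q)\<^sup>2 * (1 - 1/q)\<^sup>2"
    using assms by (simp add: field_simps power2_eq_square)
  then show ?thesis
    unfolding lhs rhs by (simp add: power_mult_distrib mult_ac)
qed

lemma sums_qgauss_term_q4: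
  fixes q :: real
  assumes "0 < q" "q < 1"
  shows "qgauss_term (1/q) (1/q) (q ^ 4) (q\<^sup>2) sums
    (qpoch_inf (q ^ 5) (q\<^sup>2) * qpoch_inf (q ^ 5) (q\<^sup>2)
      / (qpoch_inf (q ^ 4) (q\<^sup>2) * qpoch_inf (q ^ 6) (q\<^sup>2)))"
proof -
  have "q\<^sup>2 < 1" "q ^ 4 < 1" "q ^ 6 < 1"
    using assms by (simp_all add: power_less_one_iff)
  moreover have "q ^ 4 / (1/q) = q ^ 5" "q ^ 4 / (1/q * (1/q)) = q ^ 6"
    using assms by (simp_all add: power_numeral_reduce)
  ultimately show ?thesis
    using q_gauss_sum[of "q\<^sup>2" "1/q" "1/q" "q ^ 4"] assms by simp
qed

lemma qhalf_series_eq: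
  fixes q :: real
  assumes "0 < q" "q < 1"
  shows "(\<Sum>n. (qhalf_poch q (Suc n))\<^sup>2
          / (qfact2 q (Suc n + 1) * qfact2 q (Suc n + 2)) * q ^ (6 * Suc n + 6))
    = q\<^sup>2 * (1 + q)\<^sup>2 * (qpoch_inf (q ^ 5) (q\<^sup>2) * qpoch_inf (q ^ 5) (q\<^sup>2)
        / (qpoch_inf (q ^ 4) (q\<^sup>2) * qpoch_inf (q ^ 6) (q\<^sup>2))
      - (1 + (1 - q)\<^sup>2 * q ^ 4 / ((1 - q\<^sup>2) * (1 - q ^ 4))))"
    (is "_ = _ * (?S - ?head)")
proof -
  let ?t = "qgauss_term (1/q) (1/q) (q ^ 4) (q\<^sup>2)"
  have "(\<Sum>i<2. ?t i) = 1 + (1 - 1/q) * (1 - 1/q) * q ^ 6 / ((1 - q\<^sup>2) * (1 - q ^ 4))"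
  proof -
    have "q ^ 4 / (1/q * (1/q)) = q ^ 6"
      using assms by (simp add: power_numeral_reduce)
    then show ?thesis
      unfolding qgauss_term_def by (simp add: numeral_2_eq_2 qpoch_def)
  qed
  also have "(1 - 1/q) * (1 - 1/q) * q ^ 6 = (1 - q)\<^sup>2 * q ^ 4"
    using assms by (simp add: field_simps) algebra
  finally have "(\<lambda>n. ?t (n + 2)) sums (?S - ?head)"
    using sums_split_initial_segment[OF sums_qgauss_term_q4[OF assms], of 2] by simp
  then have "(\<lambda>n. q\<^sup>2 * (1 + q)\<^sup>2 * ?t (n + 2)) sums (q\<^sup>2 * (1 + q)\<^sup>2 * (?S - ?head))"
    by (rule sums_mult)
  moreover have "(qhalf_poch q (Suc n))\<^sup>2
      / (qfact2 q (Suc n + 1) * qfact2 q (Suc n + 2)) * q ^ (6 * Suc n + 6)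
      = q\<^sup>2 * (1 + q)\<^sup>2 * ?t (n + 2)" for n
    using qhalf_term_eq_qgauss_term[OF assms, of "Suc n"] by simp
  ultimately show ?thesis
    by (simp add: sums_iff)
qed

lemma pi_q_eq_shifted_qpoch_inf:
  assumes "0 < q" "q < 1"
  shows "pi_q q = q powr (1/4) * (1 - q\<^sup>2) ^ 3 * (1 - q ^ 4)
      * qpoch_inf (q ^ 4) (q\<^sup>2) * qpoch_inf (q ^ 6) (q\<^sup>2)
      / ((1 - q) * (1 - q ^ 3) * qpoch_inf (q ^ 5) (q\<^sup>2))\<^sup>2"
proof -
  have p: "\<bar>q\<^sup>2\<bar> < 1"
    using assms by (simp add: power_less_one_iff)
  have "q\<^sup>2 * (q\<^sup>2) ^ 1 = q ^ 4" "q\<^sup>2 * (q\<^sup>2) ^ 2 = q ^ 6" "q * (q\<^sup>2) ^ 2 = q ^ 5"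
    "qpoch (q\<^sup>2) (q\<^sup>2) 1 = 1 - q\<^sup>2" "qpoch (q\<^sup>2) (q\<^sup>2) 2 = (1 - q\<^sup>2) * (1 - q ^ 4)"
    "qpoch q (q\<^sup>2) 2 = (1 - q) * (1 - q ^ 3)"
    by (simp_all add: qpoch_def numeral_2_eq_2 power_numeral_reduce)
  then have P4: "qpoch_inf (q\<^sup>2) (q\<^sup>2) = (1 - q\<^sup>2) * qpoch_inf (q ^ 4) (q\<^sup>2)"
    and P6: "qpoch_inf (q\<^sup>2) (q\<^sup>2) = (1 - q\<^sup>2) * (1 - q ^ 4) * qpoch_inf (q ^ 6) (q\<^sup>2)"
    and Q: "qpoch_inf q (q\<^sup>2) = (1 - q) * (1 - q ^ 3) * qpoch_inf (q ^ 5) (q\<^sup>2)"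
    using qpoch_inf_split[OF p, of "q\<^sup>2" 1] qpoch_inf_split[OF p, of "q\<^sup>2" 2]
      qpoch_inf_split[OF p, of q 2]
    by simp_all
  have "(qpoch_inf (q\<^sup>2) (q\<^sup>2))\<^sup>2
      = (1 - q\<^sup>2) * qpoch_inf (q ^ 4) (q\<^sup>2) * ((1 - q\<^sup>2) * (1 - q ^ 4) * qpoch_inf (q ^ 6) (q\<^sup>2))"
    using arg_cong2[OF P4 P6, of "(*)"] by (simp only: power2_eq_square)
  then show ?thesis
    unfolding pi_q_def Q by (simp add: power_numeral_reduce mult_ac)
qed

text \<open>The factors \<open>A = 1 - q\<close>, \<open>B = 1 + q\<close>, \<open>C = 1 + q + q\<^sup>2\<close>, \<open>G = 1 + q\<^sup>2\<close> are kept as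
  independent atoms so that \<open>field_simps\<close> cannot expand them.\<close>

lemma factored_rational_identity:
  fixes A B C G q r Q4 Q5 Q6 :: real
  assumes "A \<noteq> 0" "B \<noteq> 0" "C \<noteq> 0" "G \<noteq> 0" "q \<noteq> 0" "r \<noteq> 0" "Q4 \<noteq> 0" "Q5 \<noteq> 0" "Q6 \<noteq> 0"
  shows "q\<^sup>2 * B\<^sup>2 * G + q ^ 6
      + G * (q\<^sup>2 * B\<^sup>2 * (Q5 * Q5 / (Q4 * Q6) - (1 + A\<^sup>2 * q ^ 4 / ((A * B) * (A * B * G)))))
    = B ^ 6 * G\<^sup>2 / (r * (A * B) ^ 3 * (A * B * G) * Q4 * Q6 / (A * (A * C) * Q5)\<^sup>2 * C\<^sup>2) * (r * q\<^sup>2)"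
  using assms by (simp add: field_simps) algebra

theorem mainTheorem9:
  fixes q :: real
  assumes "0 < q" and "q < 1"
  shows "q\<^sup>2 * (1 + q)\<^sup>2 * (1 + q\<^sup>2) + q ^ 6
      + (1 + q\<^sup>2) * (\<Sum>n. (qhalf_poch q (Suc n))\<^sup>2
            / (qfact2 q (Suc n + 1) * qfact2 q (Suc n + 2)) * q ^ (6 * Suc n + 6))
    = (1 + q) ^ 6 * (1 + q\<^sup>2)\<^sup>2 / (pi_q q * (1 + q + q\<^sup>2)\<^sup>2) * q powr (9/4)"
proof -
  have "q powr (9/4) = q powr (1/4) * q powr 2"
    by (simp flip: powr_add)
  then have powr: "q powr (9/4) = q powr (1/4) * q\<^sup>2"
    using assms by (simp add: powr_numeral)
  have factor: "1 - q ^ 3 = (1 - q) * (1 + q + q\<^sup>2)" "1 - q\<^sup>2 = (1 - q) * (1 + q)"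
    "1 - q ^ 4 = (1 - q) * (1 + q) * (1 + q\<^sup>2)"
    by algebra+
  have Q_pos: "0 < qpoch_inf (q ^ k) (q\<^sup>2)" if "k > 0" for k
    using assms that by (intro qpoch_inf_pos) (simp_all add: power_less_one_iff)
  have "0 < 1 + q\<^sup>2" "0 < 1 + q + q\<^sup>2"
    using assms(1) zero_le_power2[of q] by linarith+
  then show ?thesis
    unfolding qhalf_series_eq[OF assms] pi_q_eq_shifted_qpoch_inf[OF assms] powr factor
    using assms Q_pos[of 4] Q_pos[of 5] Q_pos[of 6] by (intro factored_rational_identity) auto
qed

end
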